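(* For each $n\ge1$ let $\mathrm T_n=(T_n,\mathrm D_n)$ be a random labeled multitype plane tree with valid law $\nu_n$, and let $\mathrm T_n^{\mathrm{sym}}=(T_n^{\mathrm{sym}},\mathrm D_n^{\mathrm{sym}})$ have law $\nu_n^{\mathrm{sym}}$. Fix a type $q\in S$. If there exists a $C([0,1],\mathbb R)$-valued random process $\Lambda^{(q)}$ such that $|V(T_n^{\mathrm{sym}})|^{-1}\Lambda^{(q)}_{T_n^{\mathrm{sym}}}\to\Lambda^{(q)}$ in distribution, then also $|V(T_n)|^{-1}\Lambda^{(q)}_{T_n}\to\Lambda^{(q)}$ in distribution.
   Context: Plane trees are rooted, encoded by Ulam–Harris words, with vertex types $s(v)$ in a countable set $S$; a labeled tree $(t,\mathrm d)$ has real displacements on edges. $P_t$ is the set of vectors of permutations of the children of each vertex; $\sigma(t,\mathrm d)$ reorders children accordingly with displacements following edges; the symmetrization of a random labeled tree is $\sigma(T,\mathrm D)$ with $\sigma$ uniform on $P_T$ given the tree, and $\nu^{\mathrm{sym}}$ is its law. A law $\nu$ is valid if (i) the law of the unlabeled tree is invariant under all $\sigma\in P_t$, (ii) the child-displacement vectors $D_v=(D_{v,v1},\dots,D_{v,vk(v)})$ are conditionally independent given $T$, (iii) the conditional law of $D_v$ depends only on the type of $v$ and the types of its children. The contour exploration $\theta:\{0,\dots,2|t|-2\}\to V(t)$ is the depth-first walk ($\theta(0)=\emptyset$; $\theta(i)$ is the lexicographically first unvisited child of $\theta(i-1)$, else its parent). For a tree $t$ with $n=|V(t)|$ vertices and $q\in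 S$, $\Lambda^{(q)}_t(i/(2n-2))=|\{0\le j<i: s(\theta(j))=q\}|$ for $0\le i\le 2n-2$, extended to $[0,1]$ by linear interpolation. Convergence in distribution is in $C([0,1],\mathbb R)$ with the uniform topology. *)

theory Defs
  imports "HOL-Probability.Probability"
begin

text \<open>A typed tree is a partial map from Ulam--Harris words to types; its vertex
set is the domain.  Children of v are v@[0], v@[1], ... (0-based indices).
A labeled tree additionally carries a displacement d w on the edge from the
parent of w to w (coordinate d w is set to 0 when w is the root or not a vertex).\<close>

type_synonym 's ttree = "nat list \<Rightarrow> 's option"
type_synonym 's ltree = "'s ttree \<times> (nat list \<Rightarrow> real)"

definition plane_tree :: "nat list set \<Rightarrow> bool" where
  "plane_tree t \<longleftrightarrow> finite t \<and> [] \<in> t \<and>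
     (\<forall>u i. u @ [i] \<in> t \<longrightarrow> u \<in> t) \<and>
     (\<forall>u i j. u @ [i] \<in> t \<longrightarrow> j < i \<longrightarrow> u @ [j] \<in> t)"

definition is_ltree :: "'s ltree \<Rightarrow> bool" where
  "is_ltree x \<longleftrightarrow> plane_tree (dom (fst x)) \<and>
     (\<forall>w. (w \<notin> dom (fst x) \<or> w = []) \<longrightarrow> snd x w = 0)"

definition kids :: "'s ttree \<Rightarrow> nat list \<Rightarrow> nat" where
  "kids \<tau> v = card {i. v @ [i] \<in> dom \<tau>}"

definition childtypes :: "'s ttree \<Rightarrow> nat list \<Rightarrow> 's list" where
  "childtypes \<tau> v = map (\<lambda>i. the (\<tau> (v @ [i]))) [0..<kids \<tau> v]"

definition ltreeM :: "'s ltree measure" where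
  "ltreeM = count_space UNIV \<Otimes>\<^sub>M (\<Pi>\<^sub>M w\<in>UNIV. borel)"

definition perms :: "'s ttree \<Rightarrow> (nat list \<Rightarrow> nat \<Rightarrow> nat) set" where
  "perms \<tau> = {\<sigma>. (\<forall>v\<in>dom \<tau>. \<sigma> v permutes {..<kids \<tau> v}) \<and> (\<forall>v. v \<notin> dom \<tau> \<longrightarrow> \<sigma> v = id)}"

text \<open>Relabeling of words: the child u@[i] of u is sent to the child number
\<sigma> u i of the image of u.\<close>
fun rl_aux :: "(nat list \<Rightarrow> nat \<Rightarrow> nat) \<Rightarrow> nat list \<Rightarrow> nat list \<Rightarrow> nat list" where
  "rl_aux \<sigma> pre [] = []"
| "rl_aux \<sigma> pre (i # w) = \<sigma> pre i # rl_aux \<sigma> (pre @ [i]) w"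

definition rl :: "(nat list \<Rightarrow> nat \<Rightarrow> nat) \<Rightarrow> nat list \<Rightarrow> nat list" where
  "rl \<sigma> w = rl_aux \<sigma> [] w"

definition act :: "(nat list \<Rightarrow> nat \<Rightarrow> nat) \<Rightarrow> 's ttree \<Rightarrow> 's ttree" where
  "act \<sigma> \<tau> = \<tau> \<circ> inv (rl \<sigma>)"

definition actL :: "(nat list \<Rightarrow> nat \<Rightarrow> nat) \<Rightarrow> 's ltree \<Rightarrow> 's ltree" where
  "actL \<sigma> x = (fst x \<circ> inv (rl \<sigma>), snd x \<circ> inv (rl \<sigma>))"

definition Dvec :: "'s ttree \<Rightarrow> 's ltree \<Rightarrow> nat list \<Rightarrow> nat \<Rightarrow> real" where
  "Dvec \<tau> x = (\<lambda>v\<in>dom \<tau>. \<lambda>i\<in>{..<kids \<tau> v}. snd x (v @ [i]))"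

definition Dspace :: "'s ttree \<Rightarrow> (nat list \<Rightarrow> nat \<Rightarrow> real) measure" where
  "Dspace \<tau> = (\<Pi>\<^sub>M v\<in>dom \<tau>. \<Pi>\<^sub>M i\<in>{..<kids \<tau> v}. borel)"

text \<open>(i) invariance of the law of the (typed) tree; (ii)+(iii): given T = tau,
the vectors D_v, v in V(tau), are independent, D_v having a law mu (type of v)
(types of children of v) depending only on these types.\<close>
definition valid_law :: "'s ltree measure \<Rightarrow> bool" where
  "valid_law \<nu> \<longleftrightarrow> prob_space \<nu> \<and> sets \<nu> = sets ltreeM \<and> (AE x in \<nu>. is_ltree x) \<and>
    (\<forall>\<tau>. \<forall>\<sigma>\<in>perms \<tau>.
        emeasure \<nu> {x \<in> space \<nu>. fst x = act \<sigma> \<tau>} = emeasure \<nu> {x \<in> space \<nu>. fst x = \<tau>}) \<and>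
    (\<exists>\<mu> :: 's \<Rightarrow> 's list \<Rightarrow> (nat \<Rightarrow> real) measure.
       (\<forall>a cs. prob_space (\<mu> a cs) \<and> sets (\<mu> a cs) = sets (\<Pi>\<^sub>M i\<in>{..<length cs}. borel)) \<and>
       (\<forall>\<tau>. \<forall>A\<in>sets (Dspace \<tau>).
          emeasure \<nu> {x \<in> space \<nu>. fst x = \<tau> \<and> Dvec \<tau> x \<in> A} =
          emeasure \<nu> {x \<in> space \<nu>. fst x = \<tau>} *
          emeasure (\<Pi>\<^sub>M v\<in>dom \<tau>. \<mu> (the (\<tau> v)) (childtypes \<tau> v)) A))"

definition sym_law :: "'s ltree measure \<Rightarrow> 's ltree measure" where
  "sym_law \<nu> = \<nu> \<bind> (\<lambda>x. distr (measure_pmf (pmf_of_set (perms (fst x)))) ltreeM (\<lambda>\<sigma>. actL \<sigma> x))"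

fun contour_aux :: "'s ttree \<Rightarrow> nat \<Rightarrow> nat list \<Rightarrow> nat list list" where
  "contour_aux \<tau> 0 v = [v]"
| "contour_aux \<tau> (Suc f) v =
     v # concat (map (\<lambda>i. contour_aux \<tau> f (v @ [i]) @ [v]) [0..<kids \<tau> v])"

text \<open>contour \<tau> ! i = theta(i), 0 <= i <= 2n-2 (depth < n, so fuel n suffices)\<close>
definition contour :: "'s ttree \<Rightarrow> nat list list" where
  "contour \<tau> = contour_aux \<tau> (card (dom \<tau>)) []"

definition cnt :: "'s \<Rightarrow> 's ttree \<Rightarrow> nat \<Rightarrow> real" where
  "cnt q \<tau> i = real (length (filter (\<lambda>v. \<tau> v = Some q) (take i (contour \<tau>))))"

text \<open>Lambda^(q)_t on [0,1]: linear interpolation of cnt at the points i/(2n-2);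
for n = 1 it is the constant 0.\<close>
definition Lam :: "'s \<Rightarrow> 's ttree \<Rightarrow> real \<Rightarrow> real" where
  "Lam q \<tau> x = (let m = 2 * card (dom \<tau>) - 2; y = x * real m; i = nat \<lfloor>y\<rfloor>
                 in cnt q \<tau> i + (y - real i) * (cnt q \<tau> (Suc i) - cnt q \<tau> i))"

text \<open>C([0,1],R) is represented inside the space of bounded continuous functions on R
with the uniform metric, by extending f constantly outside [0,1].\<close>
definition clamp01 :: "real \<Rightarrow> real" where
  "clamp01 x = max 0 (min 1 x)"

definition ext01 :: "(real \<Rightarrow> real) \<Rightarrow> (real \<Rightarrow>\<^sub>C real)" where
  "ext01 f = Bcontfun (f \<circ> clamp01)"

definition LamN :: "'s \<Rightarrow> 's ltree \<Rightarrow> (real \<Rightarrow>\<^sub>C real)" where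
  "LamN q x = ext01 (\<lambda>s. Lam q (fst x) s / real (card (dom (fst x))))"

definition conv_distr :: "(nat \<Rightarrow> 'a::metric_space measure) \<Rightarrow> 'a measure \<Rightarrow> bool" where
  "conv_distr M L \<longleftrightarrow> (\<forall>f :: 'a \<Rightarrow> real. continuous_on UNIV f \<and> bounded (range f) \<longrightarrow>
      (\<lambda>n. \<integral>z. f z \<partial>M n) \<longlonglongrightarrow> (\<integral>z. f z \<partial>L))"

end

theory Submission
  imports Defs
begin

text \<open>The rescaled contour process is a function of the unlabeled tree alone, so it suffices that
  symmetrization does not change the law of the unlabeled tree. By invariance (i) of a valid law,
  the weight \<open>P(T = \<tau>)\<close> is constant on the orbit of \<open>\<tau>\<close> under permutation vectors. The
  number of permutation vectors carrying \<open>\<tau>\<close> to \<open>\<tau>'\<close> is symmetric in \<open>\<tau>, \<tau>'\<close> (invert the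
  relabelling) and \<open>|P_\<tau>|\<close> is constant on orbits, so a double count over pairs \<open>(\<tau>, \<sigma> \<tau>)\<close>
  shows that applying a uniform \<open>\<sigma> \<in> P_T\<close> to \<open>T\<close> reproduces the law of \<open>T\<close>.\<close>

lemma rl_aux_snoc: "rl_aux \<sigma> pre (w @ [i]) = rl_aux \<sigma> pre w @ [\<sigma> (pre @ w) i]"
  by (induction w arbitrary: pre) auto

lemma rl_snoc: "rl \<sigma> (w @ [i]) = rl \<sigma> w @ [\<sigma> w i]"
  by (simp add: rl_def rl_aux_snoc)

lemma rl_Nil [simp]: "rl \<sigma> [] = []"
  by (simp add: rl_def)

lemma length_rl [simp]: "length (rl \<sigma> w) = length w"
  by (induction w rule: rev_induct) (auto simp: rl_snoc)

lemma inj_rl: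
  assumes "\<And>v. inj (\<sigma> v)"
  shows "inj (rl \<sigma>)"
proof -
  have "rl \<sigma> w = rl \<sigma> w' \<Longrightarrow> w = w'" for w w'
  proof (induction w arbitrary: w' rule: rev_induct)
    case Nil
    then show ?case by (metis length_0_conv length_rl)
  next
    case (snoc i u)
    then obtain u' i' where w': "w' = u' @ [i']"
      by (metis length_0_conv length_rl snoc_eq_iff_butlast)
    with snoc.prems have "rl \<sigma> u = rl \<sigma> u'" "\<sigma> u i = \<sigma> u' i'"
      by (simp_all add: rl_snoc)
    with snoc.IH assms show ?case
      by (simp add: w' inj_eq)
  qed
  then show ?thesis by (rule injI)
qed

lemma surj_rl:
  assumes "\<And>v. surj (\<sigma> v)"
  shows "surj (rl \<sigma>)"
proof -
  have "\<exists>w. rl \<sigma> w = w'" for w'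
  proof (induction w' rule: rev_induct)
    case (snoc j w')
    then obtain u where u: "rl \<sigma> u = w'" by blast
    moreover obtain i where "\<sigma> u i = j" using assms by (metis surjD)
    ultimately show ?case by (metis rl_snoc)
  qed (metis rl_Nil)
  then show ?thesis by (metis surjI)
qed

lemma bij_rl: "(\<And>v. bij (\<sigma> v)) \<Longrightarrow> bij (rl \<sigma>)"
  by (simp add: bij_def inj_rl surj_rl)

lemma bij_perms: "\<sigma> \<in> perms \<tau> \<Longrightarrow> bij (\<sigma> v)"
  unfolding perms_def by (cases "v \<in> dom \<tau>") (auto dest: permutes_bij)

lemma act_rl [simp]: "(\<And>v. inj (\<sigma> v)) \<Longrightarrow> act \<sigma> \<tau> (rl \<sigma> v) = \<tau> v"
  by (simp add: act_def inj_rl)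

lemma dom_act: "(\<And>v. bij (\<sigma> v)) \<Longrightarrow> dom (act \<sigma> \<tau>) = rl \<sigma> ` dom \<tau>"
  unfolding act_def dom_def by (auto simp: image_iff) (metis bij_inv_eq_iff bij_rl)+

lemma kids_act:
  assumes bij: "\<And>v. bij (\<sigma> v)"
  shows "kids (act \<sigma> \<tau>) (rl \<sigma> v) = kids \<tau> v"
proof -
  have "rl \<sigma> v @ [i] \<in> dom (act \<sigma> \<tau>) \<longleftrightarrow> v @ [inv (\<sigma> v) i] \<in> dom \<tau>" for i
  proof -
    have "rl \<sigma> v @ [i] = rl \<sigma> (v @ [inv (\<sigma> v) i])"
      using bij[of v] by (simp add: rl_snoc bij_is_surj surj_f_inv_f)
    then show ?thesis
      using bij by (simp add: domIff bij_is_inj)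
  qed
  then have "{i. rl \<sigma> v @ [i] \<in> dom (act \<sigma> \<tau>)} = \<sigma> v ` {j. v @ [j] \<in> dom \<tau>}"
    using bij[of v] by (simp add: bij_image_Collect_eq)
  moreover have "inj_on (\<sigma> v) {j. v @ [j] \<in> dom \<tau>}"
    using bij[of v] bij_is_inj inj_on_subset by blast
  ultimately show ?thesis
    unfolding kids_def by (simp add: card_image)
qed

definition perm_inv :: "(nat list \<Rightarrow> nat \<Rightarrow> nat) \<Rightarrow> nat list \<Rightarrow> nat \<Rightarrow> nat" where
  "perm_inv \<sigma> = (\<lambda>v. inv (\<sigma> (inv (rl \<sigma>) v)))"

lemma perm_inv_rl:
  assumes "\<And>v. bij (\<sigma> v)"
  shows "perm_inv \<sigma> (rl \<sigma> v) = inv (\<sigma> v)"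
  using assms inj_rl[of \<sigma>] by (simp add: perm_inv_def bij_is_inj)

lemma rl_perm_inv:
  assumes bij: "\<And>v. bij (\<sigma> v)"
  shows "rl (perm_inv \<sigma>) = inv (rl \<sigma>)"
proof -
  have left_inv: "rl (perm_inv \<sigma>) (rl \<sigma> w) = w" for w
  proof (induction w rule: rev_induct)
    case (snoc i u)
    have "inv (\<sigma> u) (\<sigma> u i) = i"
      using bij[of u] by (simp add: bij_is_inj)
    then show ?case
      using snoc.IH by (simp add: rl_snoc perm_inv_rl[OF bij])
  qed simp
  show ?thesis
  proof
    fix w
    have "rl \<sigma> (inv (rl \<sigma>) w) = w"
      using bij_rl[OF bij] by (simp add: bij_is_surj surj_f_inv_f)
    then show "rl (perm_inv \<sigma>) w = inv (rl \<sigma>) w"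
      by (metis left_inv)
  qed
qed

lemma perm_inv_perm_inv:
  assumes bij: "\<And>v. bij (\<sigma> v)"
  shows "perm_inv (perm_inv \<sigma>) = \<sigma>"
proof
  fix v
  have "inv (rl (perm_inv \<sigma>)) v = rl \<sigma> v"
    using bij_rl[OF bij] by (simp add: rl_perm_inv[OF bij] inv_inv_eq)
  then have "perm_inv (perm_inv \<sigma>) v = inv (perm_inv \<sigma> (rl \<sigma> v))"
    by (simp add: perm_inv_def[of "perm_inv \<sigma>"])
  then show "perm_inv (perm_inv \<sigma>) v = \<sigma> v"
    using bij[of v] by (simp add: perm_inv_rl[OF bij] inv_inv_eq)
qed

lemma act_perm_inv:
  assumes bij: "\<And>v. bij (\<sigma> v)"
  shows "act (perm_inv \<sigma>) (act \<sigma> \<tau>) = \<tau>"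
  using bij_rl[OF bij] by (simp add: act_def rl_perm_inv[OF bij] inv_inv_eq bij_is_inj comp_assoc)

lemma perm_inv_in_perms:
  assumes \<sigma>: "\<sigma> \<in> perms \<tau>"
  shows "perm_inv \<sigma> \<in> perms (act \<sigma> \<tau>)"
proof -
  have bij: "bij (\<sigma> v)" for v using bij_perms[OF \<sigma>] .
  have "perm_inv \<sigma> v' permutes {..<kids (act \<sigma> \<tau>) v'} \<and>
        (v' \<notin> dom (act \<sigma> \<tau>) \<longrightarrow> perm_inv \<sigma> v' = id)" for v'
  proof -
    obtain v where v': "v' = rl \<sigma> v"
      using surj_rl[of \<sigma>] bij by (metis bij_is_surj surjD)
    have "v' \<in> dom (act \<sigma> \<tau>) \<longleftrightarrow> v \<in> dom \<tau>"
      using inj_rl[of \<sigma>] bij by (simp add: v' dom_act[OF bij] inj_image_mem_iff bij_is_inj)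
    then show ?thesis
      using \<sigma> by (cases "v \<in> dom \<tau>")
        (auto simp: v' perm_inv_rl[OF bij] kids_act[OF bij] perms_def permutes_inv inv_id)
  qed
  then show ?thesis
    by (simp add: perms_def)
qed

lemma bij_betw_perms_PiE:
  "bij_betw (\<lambda>\<sigma>. restrict \<sigma> (dom \<tau>)) (perms \<tau>) (\<Pi>\<^sub>E v\<in>dom \<tau>. {p. p permutes {..<kids \<tau> v}})"
  by (rule bij_betw_byWitness[where f' = "\<lambda>h v. if v \<in> dom \<tau> then h v else id"])
     (auto simp: perms_def fun_eq_iff PiE_def extensional_def)

lemma id_in_perms: "(\<lambda>_. id) \<in> perms \<tau>"
  by (simp add: perms_def permutes_id)

lemma finite_perms: "finite (dom \<tau>) \<Longrightarrow> finite (perms \<tau>)"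
  using bij_betw_finite[OF bij_betw_perms_PiE] by (auto intro!: finite_PiE finite_permutations)

lemma card_perms: "finite (dom \<tau>) \<Longrightarrow> card (perms \<tau>) = (\<Prod>v\<in>dom \<tau>. fact (kids \<tau> v))"
  using bij_betw_same_card[OF bij_betw_perms_PiE[of \<tau>]] by (simp add: card_PiE card_permutations)

lemma card_perms_pos: "finite (dom \<tau>) \<Longrightarrow> 0 < card (perms \<tau>)"
  using finite_perms id_in_perms by (metis card_gt_0_iff empty_iff)

lemma card_perms_act:
  assumes \<sigma>: "\<sigma> \<in> perms \<tau>" and fin: "finite (dom \<tau>)"
  shows "card (perms (act \<sigma> \<tau>)) = card (perms \<tau>)"
proof -
  have bij: "bij (\<sigma> v)" for v using bij_perms[OF \<sigma>] .
  have "card (perms (act \<sigma> \<tau>)) = (\<Prod>v'\<in>rl \<sigma> ` dom \<tau>. fact (kids (act \<sigma> \<tau>) v'))"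
    using card_perms[of "act \<sigma> \<tau>"] fin by (simp add: dom_act[OF bij])
  also have "\<dots> = (\<Prod>v\<in>dom \<tau>. fact (kids \<tau> v))"
    using inj_rl[of \<sigma>] bij by (simp add: prod.reindex inj_on_subset bij_is_inj kids_act[OF bij])
  finally show ?thesis using card_perms[OF fin] by simp
qed

definition perms_to :: "'s ttree \<Rightarrow> 's ttree \<Rightarrow> (nat list \<Rightarrow> nat \<Rightarrow> nat) set" where
  "perms_to \<tau> \<tau>' = {\<sigma> \<in> perms \<tau>. act \<sigma> \<tau> = \<tau>'}"

lemma card_perms_to_commute: "card (perms_to \<tau> \<tau>') = card (perms_to \<tau>' \<tau>)"
proof -
  have "bij_betw perm_inv (perms_to \<tau> \<tau>') (perms_to \<tau>' \<tau>)"
    by (rule bij_betw_byWitness[where f' = perm_inv])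
       (auto simp: perms_to_def perm_inv_perm_inv bij_perms perm_inv_in_perms act_perm_inv)
  then show ?thesis by (rule bij_betw_same_card)
qed

section \<open>Averaging over the orbits of finite trees\<close>

definition finite_ttrees :: "'s ttree set" where
  "finite_ttrees = {\<tau>. finite (dom \<tau>)}"

lemma countable_finite_ttrees: "countable (finite_ttrees :: ('s::countable) ttree set)"
proof (rule countable_image_inj_on)
  show "inj_on Map.graph (finite_ttrees :: 's ttree set)"
    by (rule inj_onI, rule ext) (metis in_graphD in_graphI not_Some_eq)
  have "Map.graph ` (finite_ttrees :: 's ttree set) \<subseteq> Collect finite"
    by (auto simp: finite_ttrees_def graph_eq_to_snd_dom)
  then show "countable (Map.graph ` (finite_ttrees :: 's ttree set))"
    using countable_Collect_finite countable_subset by blast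
qed

lemma act_in_finite_ttrees: "\<tau> \<in> finite_ttrees \<Longrightarrow> \<sigma> \<in> perms \<tau> \<Longrightarrow> act \<sigma> \<tau> \<in> finite_ttrees"
  by (simp add: finite_ttrees_def dom_act bij_perms)

lemma nn_integral_card_perms_to:
  assumes "\<tau> \<in> finite_ttrees"
  shows "(\<integral>\<^sup>+\<tau>'. indicator B \<tau>' * of_nat (card (perms_to \<tau> \<tau>')) \<partial>count_space finite_ttrees) =
         of_nat (card {\<sigma> \<in> perms \<tau>. act \<sigma> \<tau> \<in> B})"
proof -
  let ?I = "(\<lambda>\<sigma>. act \<sigma> \<tau>) ` perms \<tau>"
  have fin: "finite (perms \<tau>)"
    using assms finite_perms by (simp add: finite_ttrees_def)
  have "(\<integral>\<^sup>+\<tau>'. indicator B \<tau>' * of_nat (card (perms_to \<tau> \<tau>')) \<partial>count_space finite_ttrees) =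
        (\<Sum>\<tau>'\<in>?I. indicator B \<tau>' * of_nat (card (perms_to \<tau> \<tau>')))"
    using assms fin act_in_finite_ttrees
    by (intro nn_integral_count_space') (auto simp: perms_to_def)
  also have "\<dots> = of_nat (\<Sum>\<tau>'\<in>?I \<inter> B. card (perms_to \<tau> \<tau>'))"
    using fin by (simp add: indicator_def of_nat_sum[symmetric] sum.inter_restrict if_distrib)
  also have "(\<Sum>\<tau>'\<in>?I \<inter> B. card (perms_to \<tau> \<tau>')) = card (\<Union>\<tau>'\<in>?I \<inter> B. perms_to \<tau> \<tau>')"
    using fin by (subst card_UN_disjoint) (auto simp: perms_to_def)
  also have "(\<Union>\<tau>'\<in>?I \<inter> B. perms_to \<tau> \<tau>') = {\<sigma> \<in> perms \<tau>. act \<sigma> \<tau> \<in> B}"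
    by (auto simp: perms_to_def)
  finally show ?thesis .
qed

lemma invariant_weight_perms_to_commute:
  fixes w :: "'s ttree \<Rightarrow> ennreal"
  assumes inv: "\<And>\<tau> \<sigma>. \<tau> \<in> finite_ttrees \<Longrightarrow> \<sigma> \<in> perms \<tau> \<Longrightarrow> w (act \<sigma> \<tau>) = w \<tau>"
    and \<tau>: "\<tau> \<in> finite_ttrees"
  shows "w \<tau> / of_nat (card (perms \<tau>)) * of_nat (card (perms_to \<tau> \<tau>')) =
         w \<tau>' / of_nat (card (perms \<tau>')) * of_nat (card (perms_to \<tau>' \<tau>))"
proof (cases "perms_to \<tau> \<tau>' = {}")
  case True
  then show ?thesis
    using card_perms_to_commute[of \<tau> \<tau>'] by simp
next
  case False
  then obtain \<sigma> where \<sigma>: "\<sigma> \<in> perms \<tau>" and \<tau>': "\<tau>' = act \<sigma> \<tau>"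
    by (auto simp: perms_to_def)
  have "w \<tau>' = w \<tau>"
    using inv[OF \<tau> \<sigma>] by (simp add: \<tau>')
  moreover have "card (perms \<tau>') = card (perms \<tau>)"
    using card_perms_act[OF \<sigma>] \<tau> by (simp add: \<tau>' finite_ttrees_def)
  ultimately show ?thesis
    using card_perms_to_commute[of \<tau> \<tau>'] by simp
qed

text \<open>Double counting over pairs \<open>(\<tau>, \<tau>')\<close> weighted by \<open>card (perms_to \<tau> \<tau>')\<close>.\<close>
lemma nn_integral_orbit_average:
  fixes w :: "('s::countable) ttree \<Rightarrow> ennreal"
  assumes inv: "\<And>\<tau> \<sigma>. \<tau> \<in> finite_ttrees \<Longrightarrow> \<sigma> \<in> perms \<tau> \<Longrightarrow> w (act \<sigma> \<tau>) = w \<tau>"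
  shows "(\<integral>\<^sup>+\<tau>. w \<tau> * (of_nat (card {\<sigma> \<in> perms \<tau>. act \<sigma> \<tau> \<in> B}) / of_nat (card (perms \<tau>)))
            \<partial>count_space finite_ttrees)
       = (\<integral>\<^sup>+\<tau>. w \<tau> * indicator B \<tau> \<partial>count_space finite_ttrees)"
proof -
  let ?C = "count_space (finite_ttrees :: 's ttree set)"
  define c where "c \<tau> = (of_nat (card (perms \<tau>)) :: ennreal)" for \<tau> :: "'s ttree"
  define N where "N \<tau> \<tau>' = (of_nat (card (perms_to \<tau> \<tau>')) :: ennreal)" for \<tau> \<tau>' :: "'s ttree"
  have c_cancel: "x / c \<tau> * c \<tau> = x" if "\<tau> \<in> finite_ttrees" for x \<tau>
    using card_perms_pos[of \<tau>] that
    by (simp add: c_def finite_ttrees_def ennreal_divide_times of_nat_less_top)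
  have swap: "w \<tau> / c \<tau> * N \<tau> \<tau>' = w \<tau>' / c \<tau>' * N \<tau>' \<tau>" if "\<tau> \<in> finite_ttrees" for \<tau> \<tau>'
    using invariant_weight_perms_to_commute[OF inv that] by (simp add: c_def N_def)
  have "(\<integral>\<^sup>+\<tau>. w \<tau> * (of_nat (card {\<sigma> \<in> perms \<tau>. act \<sigma> \<tau> \<in> B}) / c \<tau>) \<partial>?C)
      = (\<integral>\<^sup>+\<tau>. \<integral>\<^sup>+\<tau>'. w \<tau> / c \<tau> * (indicator B \<tau>' * N \<tau> \<tau>') \<partial>?C \<partial>?C)"
  proof (rule nn_integral_cong)
    fix \<tau> assume "\<tau> \<in> space ?C"
    then have "(\<integral>\<^sup>+\<tau>'. w \<tau> / c \<tau> * (indicator B \<tau>' * N \<tau> \<tau>') \<partial>?C)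
        = w \<tau> / c \<tau> * of_nat (card {\<sigma> \<in> perms \<tau>. act \<sigma> \<tau> \<in> B})"
      by (simp add: nn_integral_cmult nn_integral_card_perms_to N_def)
    then show "w \<tau> * (of_nat (card {\<sigma> \<in> perms \<tau>. act \<sigma> \<tau> \<in> B}) / c \<tau>)
        = (\<integral>\<^sup>+\<tau>'. w \<tau> / c \<tau> * (indicator B \<tau>' * N \<tau> \<tau>') \<partial>?C)"
      by (simp add: ennreal_divide_times ennreal_times_divide)
  qed
  also have "\<dots> = (\<integral>\<^sup>+\<tau>'. \<integral>\<^sup>+\<tau>. w \<tau> / c \<tau> * (indicator B \<tau>' * N \<tau> \<tau>') \<partial>?C \<partial>?C)"
    by (rule nn_integral_count_space_nn_integral[OF countable_finite_ttrees]) simp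
  also have "\<dots> = (\<integral>\<^sup>+\<tau>'. \<integral>\<^sup>+\<tau>. indicator B \<tau>' * (w \<tau>' / c \<tau>') * N \<tau>' \<tau> \<partial>?C \<partial>?C)"
    by (intro nn_integral_cong) (metis swap space_count_space mult.left_commute mult.assoc)
  also have "\<dots> = (\<integral>\<^sup>+\<tau>'. indicator B \<tau>' * (w \<tau>' / c \<tau>' * c \<tau>') \<partial>?C)"
  proof (rule nn_integral_cong)
    fix \<tau>' assume "\<tau>' \<in> space ?C"
    then have "(\<integral>\<^sup>+\<tau>. N \<tau>' \<tau> \<partial>?C) = c \<tau>'"
      using nn_integral_card_perms_to[of \<tau>' UNIV] by (simp add: N_def c_def)
    then show "(\<integral>\<^sup>+\<tau>. indicator B \<tau>' * (w \<tau>' / c \<tau>') * N \<tau>' \<tau> \<partial>?C)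
        = indicator B \<tau>' * (w \<tau>' / c \<tau>' * c \<tau>')"
      by (simp add: nn_integral_cmult mult.assoc)
  qed
  also have "\<dots> = (\<integral>\<^sup>+\<tau>. w \<tau> * indicator B \<tau> \<partial>?C)"
    by (intro nn_integral_cong) (metis c_cancel mult.commute space_count_space)
  finally show ?thesis
    by (simp add: c_def)
qed

lemma space_ltreeM [simp]: "space ltreeM = UNIV"
  by (simp add: ltreeM_def space_pair_measure space_PiM PiE_UNIV_domain)

lemma measurable_fst_ltreeM: "fst \<in> measurable ltreeM (count_space UNIV)"
  unfolding ltreeM_def by (rule measurable_fst)

lemma measurable_tree_fun:
  assumes "\<And>\<tau>. f \<tau> \<in> space N"
  shows "(\<lambda>x. f (fst x)) \<in> measurable ltreeM N"
  using measurable_fst_ltreeM by (rule measurable_compose) (simp add: assms)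

lemma tree_event_in_sets: "{x. fst x \<in> B} \<in> sets ltreeM"
  using measurable_sets[OF measurable_fst_ltreeM, of B] by (simp add: vimage_def)

lemma valid_lawD:
  assumes "valid_law \<nu>"
  shows "prob_space \<nu>" and "sets \<nu> = sets ltreeM" and "space \<nu> = UNIV"
    and "AE x in \<nu>. fst x \<in> finite_ttrees"
    and "\<sigma> \<in> perms \<tau> \<Longrightarrow> emeasure \<nu> {x. fst x = act \<sigma> \<tau>} = emeasure \<nu> {x. fst x = \<tau>}"
proof -
  show sets: "sets \<nu> = sets ltreeM"
    using assms by (simp add: valid_law_def)
  then show space: "space \<nu> = UNIV"
    using sets_eq_imp_space_eq by fastforce
  show "prob_space \<nu>"
    using assms by (simp add: valid_law_def)
  have "AE x in \<nu>. is_ltree x"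
    using assms by (simp add: valid_law_def)
  then show "AE x in \<nu>. fst x \<in> finite_ttrees"
    by eventually_elim (simp add: is_ltree_def plane_tree_def finite_ttrees_def)
  show "\<sigma> \<in> perms \<tau> \<Longrightarrow> emeasure \<nu> {x. fst x = act \<sigma> \<tau>} = emeasure \<nu> {x. fst x = \<tau>}"
    using assms space by (simp add: valid_law_def)
qed

lemma nn_integral_tree_fun:
  fixes \<nu> :: "('s::countable) ltree measure"
  assumes sets: "sets \<nu> = sets ltreeM" and fin: "AE x in \<nu>. fst x \<in> finite_ttrees"
  shows "(\<integral>\<^sup>+x. g (fst x) \<partial>\<nu>) =
         (\<integral>\<^sup>+\<tau>. emeasure \<nu> {x. fst x = \<tau>} * g \<tau> \<partial>count_space finite_ttrees)"
proof -
  have event: "{x. fst x = \<tau>} \<in> sets \<nu>" for \<tau>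
    using tree_event_in_sets[of "{\<tau>}"] by (simp add: sets)
  have "(\<integral>\<^sup>+x. g (fst x) \<partial>\<nu>) =
        (\<integral>\<^sup>+x. \<integral>\<^sup>+\<tau>. g \<tau> * indicator {y. fst y = \<tau>} x \<partial>count_space finite_ttrees \<partial>\<nu>)"
  proof (rule nn_integral_cong_AE)
    show "AE x in \<nu>. g (fst x) =
        (\<integral>\<^sup>+\<tau>. g \<tau> * indicator {y. fst y = \<tau>} x \<partial>count_space finite_ttrees)"
      using fin
    proof eventually_elim
      case (elim x)
      have "(\<integral>\<^sup>+\<tau>. g \<tau> * indicator {y. fst y = \<tau>} x \<partial>count_space finite_ttrees) =
            (\<Sum>\<tau>\<in>{fst x}. g \<tau> * indicator {y. fst y = \<tau>} x)"
        using elim by (intro nn_integral_count_space') auto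
      then show ?case by simp
    qed
  qed
  also have "\<dots> = (\<integral>\<^sup>+\<tau>. \<integral>\<^sup>+x. g \<tau> * indicator {y. fst y = \<tau>} x \<partial>\<nu> \<partial>count_space finite_ttrees)"
    by (rule nn_integral_count_space_nn_integral[OF countable_finite_ttrees]) (use event in simp)
  also have "\<dots> = (\<integral>\<^sup>+\<tau>. emeasure \<nu> {x. fst x = \<tau>} * g \<tau> \<partial>count_space finite_ttrees)"
    by (intro nn_integral_cong) (simp add: nn_integral_cmult_indicator event mult.commute)
  finally show ?thesis .
qed

definition sym_kernel :: "'s ltree \<Rightarrow> 's ltree measure" where
  "sym_kernel x = distr (measure_pmf (pmf_of_set (perms (fst x)))) ltreeM (\<lambda>\<sigma>. actL \<sigma> x)"

lemma sym_law_eq_bind: "sym_law \<nu> = \<nu> \<bind> sym_kernel"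
  by (simp add: sym_law_def sym_kernel_def[abs_def])

lemma sym_kernel_in_space_subprob_algebra: "sym_kernel x \<in> space (subprob_algebra ltreeM)"
proof -
  have "prob_space (sym_kernel x)"
    unfolding sym_kernel_def
    by (rule prob_space.prob_space_distr) (auto simp: prob_space_measure_pmf)
  then show ?thesis
    by (simp add: space_subprob_algebra sym_kernel_def prob_space_imp_subprob_space)
qed

lemma emeasure_sym_kernel_tree_event:
  assumes "fst x \<in> finite_ttrees"
  shows "emeasure (sym_kernel x) {y. fst y \<in> B} =
         of_nat (card {\<sigma> \<in> perms (fst x). act \<sigma> (fst x) \<in> B}) / of_nat (card (perms (fst x)))"
proof -
  have fin: "finite (perms (fst x))"
    using assms finite_perms by (simp add: finite_ttrees_def)
  have ne: "perms (fst x) \<noteq> {}"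
    using id_in_perms by blast
  have "fst (actL \<sigma> x) = act \<sigma> (fst x)" for \<sigma>
    by (simp add: actL_def act_def)
  then have "emeasure (sym_kernel x) {y. fst y \<in> B} =
        emeasure (measure_pmf (pmf_of_set (perms (fst x)))) {\<sigma>. act \<sigma> (fst x) \<in> B}"
    unfolding sym_kernel_def by (subst emeasure_distr) (auto simp: tree_event_in_sets)
  also have "\<dots> = of_nat (card {\<sigma> \<in> perms (fst x). act \<sigma> (fst x) \<in> B}) /
                    of_nat (card (perms (fst x)))"
    using fin ne
    by (simp add: emeasure_pmf_of_set Int_def conj_commute divide_ennreal[symmetric]
        ennreal_of_nat_eq_real_of_nat card_gt_0_iff)
  finally show ?thesis .
qed

lemma emeasure_sym_law_tree_event:
  fixes \<nu> :: "('s::countable) ltree measure"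
  assumes valid: "valid_law \<nu>" and kernel: "sym_kernel \<in> measurable \<nu> (subprob_algebra ltreeM)"
  shows "emeasure (sym_law \<nu>) {x. fst x \<in> B} = emeasure \<nu> {x. fst x \<in> B}"
proof -
  note V = valid_lawD[OF valid]
  define w where "w \<tau> = emeasure \<nu> {x. fst x = \<tau>}" for \<tau> :: "'s ttree"
  have "emeasure (sym_law \<nu>) {x. fst x \<in> B} = (\<integral>\<^sup>+x. emeasure (sym_kernel x) {y. fst y \<in> B} \<partial>\<nu>)"
    unfolding sym_law_eq_bind using V(3) kernel tree_event_in_sets by (intro emeasure_bind) auto
  also have "\<dots> = (\<integral>\<^sup>+x. (\<lambda>\<tau>. of_nat (card {\<sigma> \<in> perms \<tau>. act \<sigma> \<tau> \<in> B}) /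
                                of_nat (card (perms \<tau>))) (fst x) \<partial>\<nu>)"
    using V(4) by (intro nn_integral_cong_AE) (auto simp: emeasure_sym_kernel_tree_event)
  also have "\<dots> = (\<integral>\<^sup>+\<tau>. w \<tau> * (of_nat (card {\<sigma> \<in> perms \<tau>. act \<sigma> \<tau> \<in> B}) / of_nat (card (perms \<tau>)))
                     \<partial>count_space finite_ttrees)"
    unfolding w_def by (rule nn_integral_tree_fun[OF V(2) V(4)])
  also have "\<dots> = (\<integral>\<^sup>+\<tau>. w \<tau> * indicator B \<tau> \<partial>count_space finite_ttrees)"
    by (rule nn_integral_orbit_average) (simp add: w_def V(5))
  also have "\<dots> = (\<integral>\<^sup>+x. indicator B (fst x) \<partial>\<nu>)"
    unfolding w_def by (rule nn_integral_tree_fun[OF V(2) V(4), symmetric])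
  also have "\<dots> = emeasure \<nu> {x. fst x \<in> B}"
    using tree_event_in_sets[of B] V(2) by (simp add: indicator_def flip: nn_integral_indicator)
  finally show ?thesis .
qed

lemma distr_sym_law_tree_fun:
  fixes \<nu> :: "('s::countable) ltree measure"
  assumes valid: "valid_law \<nu>" and kernel: "sym_kernel \<in> measurable \<nu> (subprob_algebra ltreeM)"
    and f_space: "\<And>\<tau>. f \<tau> \<in> space N"
  shows "distr (sym_law \<nu>) N (\<lambda>x. f (fst x)) = distr \<nu> N (\<lambda>x. f (fst x))"
proof (rule measure_eqI)
  note V = valid_lawD[OF valid]
  have sets_sym: "sets (sym_law \<nu>) = sets ltreeM"
    unfolding sym_law_eq_bind using V(3) by (intro sets_bind[OF sets_kernel[OF kernel]]) auto
  have meas: "(\<lambda>x. f (fst x)) \<in> measurable ltreeM N"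
    using f_space by (rule measurable_tree_fun)
  fix A assume "A \<in> sets (distr (sym_law \<nu>) N (\<lambda>x. f (fst x)))"
  then have A: "A \<in> sets N" by simp
  have tree_eq: "emeasure (sym_law \<nu>) ((\<lambda>x. f (fst x)) -` A) = emeasure \<nu> ((\<lambda>x. f (fst x)) -` A)"
    using emeasure_sym_law_tree_event[OF valid kernel, of "f -` A"] by (simp add: vimage_def)
  show "emeasure (distr (sym_law \<nu>) N (\<lambda>x. f (fst x))) A = emeasure (distr \<nu> N (\<lambda>x. f (fst x))) A"
    using emeasure_distr[OF meas[folded measurable_cong_sets[OF sets_sym refl]] A]
      emeasure_distr[OF meas[folded measurable_cong_sets[OF V(2) refl]] A]
      sets_eq_imp_space_eq[OF sets_sym] V(3) tree_eq
    by simp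
qed simp

section \<open>Non-measurable kernels\<close>

lemma emeasure_distr_not_measurable:
  assumes not_meas: "f \<notin> measurable M N" and f: "f \<in> space M \<rightarrow> space N"
    and nonzero: "emeasure M (space M) \<noteq> 0"
  shows "emeasure (distr M N f) A = 0"
proof -
  define \<mu> where "\<mu> = (\<lambda>B. emeasure M (f -` B \<inter> space M))"
  obtain B where B: "B \<in> sets N" "f -` B \<inter> space M \<notin> sets M"
    using not_meas f unfolding measurable_def by blast
  have "f -` B \<inter> space M = space M - (f -` (space N - B) \<inter> space M)"
    using f by blast
  then have "f -` (space N - B) \<inter> space M \<notin> sets M"
    using B(2) by (metis sets.compl_sets)
  then have null: "\<mu> B = 0" "\<mu> (space N - B) = 0"
    using B(2) by (simp_all add: \<mu>_def emeasure_notin_sets)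
  have "\<not> measure_space (space N) (sigma_sets (space N) (sets N)) \<mu>"
  proof
    assume "measure_space (space N) (sigma_sets (space N) (sets N)) \<mu>"
    then have "additive (sets N) \<mu>"
      by (simp add: measure_space_def sets.sigma_sets_eq sets.countably_additive_additive)
    then have "\<mu> (B \<union> (space N - B)) = \<mu> B + \<mu> (space N - B)"
      using B(1) by (intro additiveD) auto
    moreover have "B \<union> (space N - B) = space N"
      using sets.sets_into_space[OF B(1)] by blast
    moreover have "\<mu> (space N) = emeasure M (space M)"
      using f by (auto simp: \<mu>_def intro!: arg_cong[where f = "emeasure M"])
    ultimately show False
      using null nonzero by simp
  qed
  then show ?thesis
    by (simp add: distr_def emeasure_measure_of_conv \<mu>_def)
qed

lemma emeasure_distr_of_null:
  "(\<And>X. emeasure M X = 0) \<Longrightarrow> emeasure (distr M N f) A = 0"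
  by (simp add: distr_def emeasure_measure_of_conv)

lemma emeasure_join_of_null:
  assumes "\<And>X. emeasure M X = 0"
  shows "emeasure (join M) A = 0"
proof -
  have "space M \<in> null_sets M"
    using assms by (simp add: null_sets_def)
  then have "AE x in M. emeasure x A = 0"
    by (rule AE_I') auto
  then have "(\<integral>\<^sup>+x. emeasure x A \<partial>M) = (\<integral>\<^sup>+x. 0 \<partial>M)"
    by (rule nn_integral_cong_AE)
  then show ?thesis
    by (simp add: join_def emeasure_measure_of_conv)
qed

text \<open>\<open>sym_law\<close> is a monadic bind, which degenerates to the null measure when the kernel is not
  measurable. Measurability of \<open>sym_kernel\<close> is never established: this case is ruled out in the
  end because the symmetrized laws converge to a probability law.\<close>
lemma emeasure_sym_law_not_measurable:
  fixes \<nu> :: "('s::countable) ltree measure"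
  assumes valid: "valid_law \<nu>" and not_meas: "sym_kernel \<notin> measurable \<nu> (subprob_algebra ltreeM)"
  shows "emeasure (sym_law \<nu>) X = 0"
proof -
  note V = valid_lawD[OF valid]
  have "subprob_algebra (sym_kernel x) = subprob_algebra ltreeM" for x :: "'s ltree"
    by (rule subprob_algebra_cong) (simp add: sym_kernel_def)
  then have "sym_law \<nu> = join (distr \<nu> (subprob_algebra ltreeM) sym_kernel)"
    by (simp add: sym_law_eq_bind bind_def V(3))
  moreover have "emeasure (distr \<nu> (subprob_algebra ltreeM) sym_kernel) Y = 0" for Y
    using not_meas sym_kernel_in_space_subprob_algebra prob_space.emeasure_space_1[OF V(1)]
    by (intro emeasure_distr_not_measurable) auto
  ultimately show ?thesis
    by (simp add: emeasure_join_of_null)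
qed

lemma distr_sym_law_tree_fun_cases:
  fixes \<nu> :: "('s::countable) ltree measure"
  assumes valid: "valid_law \<nu>" and f_space: "\<And>\<tau>. f \<tau> \<in> space N"
  obtains "distr (sym_law \<nu>) N (\<lambda>x. f (fst x)) = distr \<nu> N (\<lambda>x. f (fst x))"
    | "emeasure (distr (sym_law \<nu>) N (\<lambda>x. f (fst x))) (space N) = 0"
proof (cases "sym_kernel \<in> measurable \<nu> (subprob_algebra ltreeM)")
  case True
  then show ?thesis
    using distr_sym_law_tree_fun[of \<nu> f N] valid f_space that by blast
next
  case False
  then show ?thesis
    using emeasure_distr_of_null emeasure_sym_law_not_measurable[OF valid] that by blast
qed

lemma conv_distr_total_mass:
  fixes M :: "nat \<Rightarrow> 'a::metric_space measure"
  assumes "conv_distr M L" and "prob_space L"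
  shows "(\<lambda>n. measure (M n) (space (M n))) \<longlonglongrightarrow> 1"
proof -
  have "(\<lambda>n. \<integral>z. (1::real) \<partial>M n) \<longlonglongrightarrow> (\<integral>z. 1 \<partial>L)"
    using assms(1) unfolding conv_distr_def
    by (rule allE[of _ "\<lambda>_. 1"]) (simp add: continuous_on_const)
  then show ?thesis
    using assms(2) by (simp add: lebesgue_integral_const prob_space.prob_space)
qed

lemma conv_distr_eventually_eq:
  assumes "conv_distr M L" and "eventually (\<lambda>n. M n = M' n) sequentially"
  shows "conv_distr M' L"
  unfolding conv_distr_def
proof (intro allI impI)
  fix f :: "'a \<Rightarrow> real" assume "continuous_on UNIV f \<and> bounded (range f)"
  then have "(\<lambda>n. \<integral>z. f z \<partial>M n) \<longlonglongrightarrow> (\<integral>z. f z \<partial>L)"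
    using assms(1) unfolding conv_distr_def by blast
  moreover have "eventually (\<lambda>n. (\<integral>z. f z \<partial>M n) = (\<integral>z. f z \<partial>M' n)) sequentially"
    using assms(2) by eventually_elim simp
  ultimately show "(\<lambda>n. \<integral>z. f z \<partial>M' n) \<longlonglongrightarrow> (\<integral>z. f z \<partial>L)"
    by (rule Lim_transform_eventually)
qed

theorem proposition3p6:
  fixes \<nu> :: "nat \<Rightarrow> ('s::countable) ltree measure"
    and q :: 's
    and L :: "(real \<Rightarrow>\<^sub>C real) measure"
  assumes valid: "\<And>n. valid_law (\<nu> n)"
    and L_prob: "prob_space L" and L_sets: "sets L = sets borel"
    and L_C01: "AE g in L. \<forall>x. apply_bcontfun g x = apply_bcontfun g (clamp01 x)"
    and conv_sym: "conv_distr (\<lambda>n. distr (sym_law (\<nu> n)) borel (LamN q)) L"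
  shows "conv_distr (\<lambda>n. distr (\<nu> n) borel (LamN q)) L"
proof -
  \<comment> \<open>Only the total mass of the limit enters.\<close>
  define F where "F \<tau> = ext01 (\<lambda>s. Lam q \<tau> s / real (card (dom \<tau>)))" for \<tau> :: "'s ttree"
  have LamN: "LamN q = (\<lambda>x. F (fst x))"
    by (simp add: LamN_def F_def fun_eq_iff)
  have "(\<lambda>n. measure (distr (sym_law (\<nu> n)) borel (LamN q)) UNIV) \<longlonglongrightarrow> 1"
    using conv_distr_total_mass[OF conv_sym L_prob] by simp
  then have "eventually (\<lambda>n. measure (distr (sym_law (\<nu> n)) borel (LamN q)) UNIV > 0) sequentially"
    by (rule order_tendstoD) simp
  then have "eventually (\<lambda>n. distr (sym_law (\<nu> n)) borel (LamN q) = distr (\<nu> n) borel (LamN q))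
      sequentially"
  proof eventually_elim
    case (elim n)
    then show ?case
      unfolding LamN
      by (cases rule: distr_sym_law_tree_fun_cases[OF valid, of F borel n]) (auto simp: measure_def)
  qed
  with conv_sym show ?thesis
    by (rule conv_distr_eventually_eq)
qed

end
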